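(* Let $X$ be a real Hilbert space and let $T_1,T_2,T_3\colon X\to X$ be $\sigma_1$-, $\sigma_2$-, and $\sigma_3$-cocoercive, respectively. Let $\eta,\nu,\lambda,\delta>0$, set $S:=-\nu\mathrm{Id}+\lambda T_1-\delta T_3T_1$ and $$T:=\mathrm{Id}-\eta T_1+\eta T_2 S.$$ (i) If $\lambda=2\nu\sigma_1=2\sigma_2$ and $\eta^*:=\frac{1}{\nu}\big(\lambda-\frac{\delta}{2\sigma_3}\big)>0$, then for all $x,y\in X$, $$\|Tx-Ty\|^2\le\|x-y\|^2-\Big(\frac{\eta^*}{\eta}-1\Big)\|(\mathrm{Id}-T)x-(\mathrm{Id}-T)y\|^2-\frac{\delta}{2\eta\nu\sigma_3}\|(\mathrm{Id}-T)x-(\mathrm{Id}-T)y-2\eta\sigma_3(T_3T_1x-T_3T_1y)\|^2.$$ (ii) If $\lambda<\nu\sigma_1+\sigma_2$ and $$\eta^*:=\frac{1}{\nu}\Big(\frac{(2\nu\sigma_1-\lambda)(2\sigma_2-\lambda)}{2(\nu\sigma_1+\sigma_2-\lambda)}+\lambda-\frac{\delta}{2\sigma_3}\Big)>0,$$ then for all $x,y\in X$, $$\|Tx-Ty\|^2\le\|x-y\|^2-\Big(\frac{\eta^*}{\eta}-1\Big)\|(\mathrm{Id}-T)x-(\mathrm{Id}-T)y\|^2-\frac{\delta}{2\eta\nu\sigma_3}\|(\mathrm{Id}-T)x-(\mathrm{Id}-T)y-2\eta\sigma_3(T_3T_1x-T_3T_1y)\|^2$$ $$\qquad-\frac{\eta}{2\nu(\nu\sigma_1+\sigma_2-\lambda)}\|(2\nu\sigma_1-\lambda)(T_1x-T_1y)+(2\sigma_2-\lambda)(T_2Sx-T_2Sy)\|^2.$$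 In both cases, $T$ is conically $\frac{\eta}{\eta^*}$-averaged.
   Context: An operator $T\colon X\to X$ is $\sigma$-cocoercive ($\sigma>0$) if $\langle x-y,Tx-Ty\rangle\ge\sigma\|Tx-Ty\|^2$ for all $x,y$. An operator $T\colon X\to X$ is conically $\theta$-averaged ($\theta>0$) if $T=(1-\theta)\mathrm{Id}+\theta N$ for some nonexpansive (1-Lipschitz) $N\colon X\to X$. *)

theory Defs
  imports "HOL-Analysis.Analysis"
begin

definition cocoercive :: "real \<Rightarrow> ('a::real_inner \<Rightarrow> 'a) \<Rightarrow> bool" where
  "cocoercive \<sigma> T \<longleftrightarrow> \<sigma> > 0 \<and>
     (\<forall>x y. inner (x - y) (T x - T y) \<ge> \<sigma> * (norm (T x - T y))\<^sup>2)"

definition nonexpansive :: "('a::real_normed_vector \<Rightarrow> 'a) \<Rightarrow> bool" where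
  "nonexpansive N \<longleftrightarrow> (\<forall>x y. norm (N x - N y) \<le> norm (x - y))"

definition conically_averaged :: "real \<Rightarrow> ('a::real_normed_vector \<Rightarrow> 'a) \<Rightarrow> bool" where
  "conically_averaged \<theta> T \<longleftrightarrow> \<theta> > 0 \<and>
     (\<exists>N. nonexpansive N \<and> T = (\<lambda>x. (1 - \<theta>) *\<^sub>R x + \<theta> *\<^sub>R N x))"

end

theory Submission
  imports Defs
begin

(* Put u = (x - T x) - (y - T y) = \<eta> (T1 x - T1 y - (T2 (S x) - T2 (S y))). Adding the
   cocoercivity inequalities of T1 at (x, y), of T2 at (S x, S y) and of T3 at (T1 x, T1 y) with
   weights \<nu>, 1 and \<delta> bounds \<nu> <x - y, u> / \<eta> from below by the quadratic form
   \<nu> \<sigma>1 |v|^2 - \<lambda> <v, w> + \<sigma>2 |w|^2 in v = T1 x - T1 y, w = T2 (S x) - T2 (S y), plus a term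
   in T3 (T1 x) - T3 (T1 y) that becomes a square after completing it. Splitting the quadratic
   form into a multiple of |v - w|^2 and a nonnegative remainder, and expanding
   |T x - T y|^2 = |x - y|^2 - 2 <x - y, u> + |u|^2, gives both estimates. An estimate
   |T x - T y|^2 <= |x - y|^2 - (1/\<theta> - 1) |u|^2 says precisely that Id - (Id - T)/\<theta> is
   nonexpansive, i.e. that T is conically \<theta>-averaged. *)

lemma cocoercive_pos: "cocoercive \<sigma> T \<Longrightarrow> \<sigma> > 0"
  by (simp add: cocoercive_def)

lemma cocoercive_inner_ge:
  "cocoercive \<sigma> T \<Longrightarrow> \<sigma> * (norm (T x - T y))\<^sup>2 \<le> inner (x - y) (T x - T y)"
  by (simp add: cocoercive_def)

lemma norm_sq_completing_square:
  fixes v d :: "'a::real_inner"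
  assumes "\<sigma> \<noteq> 0"
  shows "\<sigma> * (norm v)\<^sup>2 - inner d v = ((norm (d - (2 * \<sigma>) *\<^sub>R v))\<^sup>2 - (norm d)\<^sup>2) / (4 * \<sigma>)"
  using assms unfolding power2_norm_eq_inner
  by (simp add: inner_diff_left inner_diff_right inner_commute[of v d] field_simps)

lemma quadratic_form_decomposition:
  fixes v w :: "'a::real_inner"
  assumes "a + b - l \<noteq> 0"
  shows "a * (norm v)\<^sup>2 - l * inner v w + b * (norm w)\<^sup>2
    = (l / 2 + (2 * a - l) * (2 * b - l) / (4 * (a + b - l))) * (norm (v - w))\<^sup>2
      + (norm ((2 * a - l) *\<^sub>R v + (2 * b - l) *\<^sub>R w))\<^sup>2 / (4 * (a + b - l))"
proof -
  define k where "k = a + b - l"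
  have "k \<noteq> 0" and l: "l = a + b - k"
    using assms by (auto simp: k_def)
  show ?thesis
    using \<open>k \<noteq> 0\<close> unfolding k_def[symmetric] unfolding l power2_norm_eq_inner
    by (simp add: inner_diff_left inner_diff_right inner_add_left inner_add_right
        inner_commute[of w v] field_simps)
qed

lemma quadratic_form_eq_of_balanced:
  fixes v w :: "'a::real_inner"
  assumes "a = l / 2" "b = l / 2"
  shows "a * (norm v)\<^sup>2 - l * inner v w + b * (norm w)\<^sup>2 = l / 2 * (norm (v - w))\<^sup>2"
  unfolding assms power2_norm_eq_inner
  by (simp add: inner_diff_left inner_diff_right inner_commute[of w v] algebra_simps)

lemma conically_averagedI:
  fixes T :: "'a::real_inner \<Rightarrow> 'a"
  assumes "\<theta> > 0"
    and descent: "\<And>x y. (norm (T x - T y))\<^sup>2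
      \<le> (norm (x - y))\<^sup>2 - (1 / \<theta> - 1) * (norm ((x - T x) - (y - T y)))\<^sup>2"
  shows "conically_averaged \<theta> T"
proof -
  define N where "N x = x - (1 / \<theta>) *\<^sub>R (x - T x)" for x
  have "norm (N x - N y) \<le> norm (x - y)" for x y
  proof -
    define a u where "a = x - y" and "u = (x - T x) - (y - T y)"
    have "(norm (a - u))\<^sup>2 \<le> (norm a)\<^sup>2 - (1 / \<theta> - 1) * (norm u)\<^sup>2"
      using descent[of x y] by (simp add: a_def u_def algebra_simps)
    then have "(1 / \<theta>) * (norm u)\<^sup>2 \<le> 2 * inner a u"
      by (simp add: power2_norm_eq_inner inner_diff_left inner_diff_right inner_commute[of u a]
          algebra_simps)
    then have "(1 / \<theta>) * ((1 / \<theta>) * (norm u)\<^sup>2) \<le> (1 / \<theta>) * (2 * inner a u)"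
      by (rule mult_left_mono) (use \<open>\<theta> > 0\<close> in simp)
    then have "(norm (a - (1 / \<theta>) *\<^sub>R u))\<^sup>2 \<le> (norm a)\<^sup>2"
      unfolding power2_norm_eq_inner
      by (simp add: inner_diff_left inner_diff_right inner_commute[of u a] algebra_simps)
    moreover have "N x - N y = a - (1 / \<theta>) *\<^sub>R u"
      by (simp add: N_def a_def u_def algebra_simps)
    ultimately show ?thesis
      unfolding a_def by (auto intro: power2_le_imp_le)
  qed
  moreover have "T = (\<lambda>x. (1 - \<theta>) *\<^sub>R x + \<theta> *\<^sub>R N x)"
    using \<open>\<theta> > 0\<close> by (simp add: N_def algebra_simps)
  ultimately show ?thesis
    using \<open>\<theta> > 0\<close> unfolding conically_averaged_def nonexpansive_def by blast
qed

lemma cocoercive_splitting_weighted_inequality: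
  fixes T1 T2 T3 S :: "'a::real_inner \<Rightarrow> 'a" and x y :: 'a and \<rho> :: "'a \<Rightarrow> 'a \<Rightarrow> real"
  assumes c1: "cocoercive \<sigma>1 T1" and c2: "cocoercive \<sigma>2 T2" and c3: "cocoercive \<sigma>3 T3"
    and "\<nu> \<ge> 0" "\<delta> \<ge> 0"
    and S_def: "S = (\<lambda>x. - (\<nu> *\<^sub>R x) + lam *\<^sub>R T1 x - \<delta> *\<^sub>R T3 (T1 x))"
    and quadratic_bound: "\<And>v w. \<gamma> * (norm (v - w))\<^sup>2 + \<rho> v w
      \<le> \<nu> * \<sigma>1 * (norm v)\<^sup>2 - lam * inner v w + \<sigma>2 * (norm w)\<^sup>2"
  defines "t1 \<equiv> T1 x - T1 y" and "t2 \<equiv> T2 (S x) - T2 (S y)" and "t3 \<equiv> T3 (T1 x) - T3 (T1 y)"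
  shows "\<gamma> * (norm (t1 - t2))\<^sup>2 + \<rho> t1 t2 + \<delta> * (\<sigma>3 * (norm t3)\<^sup>2 - inner (t1 - t2) t3)
    \<le> \<nu> * inner (x - y) (t1 - t2)"
proof -
  have "S x - S y = - \<nu> *\<^sub>R (x - y) + lam *\<^sub>R t1 - \<delta> *\<^sub>R t3"
    by (simp add: S_def t1_def t3_def algebra_simps)
  then have "\<sigma>2 * (norm t2)\<^sup>2 \<le> - \<nu> * inner (x - y) t2 + lam * inner t1 t2 - \<delta> * inner t3 t2"
    using cocoercive_inner_ge[OF c2, of "S x" "S y"]
    by (simp add: t2_def inner_diff_left inner_add_left)
  moreover have "\<nu> * (\<sigma>1 * (norm t1)\<^sup>2) \<le> \<nu> * inner (x - y) t1"
    using cocoercive_inner_ge[OF c1, of x y] \<open>\<nu> \<ge> 0\<close> by (simp add: t1_def mult_left_mono)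
  moreover have "\<delta> * (\<sigma>3 * (norm t3)\<^sup>2) \<le> \<delta> * inner t1 t3"
    using cocoercive_inner_ge[OF c3, of "T1 x" "T1 y"] \<open>\<delta> \<ge> 0\<close>
    by (simp add: t1_def t3_def mult_left_mono)
  ultimately show ?thesis
    using quadratic_bound[of t1 t2]
    by (simp add: inner_diff_left inner_diff_right inner_commute[of t3 t2] algebra_simps)
qed

lemma cocoercive_splitting_descent:
  fixes T1 T2 T3 S T :: "'a::real_inner \<Rightarrow> 'a" and x y :: 'a and \<rho> :: "'a \<Rightarrow> 'a \<Rightarrow> real"
  assumes c1: "cocoercive \<sigma>1 T1" and c2: "cocoercive \<sigma>2 T2" and c3: "cocoercive \<sigma>3 T3"
    and "\<eta> > 0" "\<nu> > 0" "\<delta> \<ge> 0"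
    and S_def: "S = (\<lambda>x. - (\<nu> *\<^sub>R x) + lam *\<^sub>R T1 x - \<delta> *\<^sub>R T3 (T1 x))"
    and T_def: "T = (\<lambda>x. x - \<eta> *\<^sub>R T1 x + \<eta> *\<^sub>R T2 (S x))"
    and quadratic_bound: "\<And>v w. \<gamma> * (norm (v - w))\<^sup>2 + \<rho> v w
      \<le> \<nu> * \<sigma>1 * (norm v)\<^sup>2 - lam * inner v w + \<sigma>2 * (norm w)\<^sup>2"
    and \<eta>s: "\<eta>s = (2 * \<gamma> - \<delta> / (2 * \<sigma>3)) / \<nu>"
  defines "t1 \<equiv> T1 x - T1 y" and "t2 \<equiv> T2 (S x) - T2 (S y)" and "t3 \<equiv> T3 (T1 x) - T3 (T1 y)"
  shows "(norm (T x - T y))\<^sup>2 \<le> (norm (x - y))\<^sup>2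
      - (\<eta>s / \<eta> - 1) * (norm ((x - T x) - (y - T y)))\<^sup>2
      - \<delta> / (2 * \<eta> * \<nu> * \<sigma>3) * (norm ((x - T x) - (y - T y) - (2 * \<eta> * \<sigma>3) *\<^sub>R t3))\<^sup>2
      - 2 * \<eta> / \<nu> * \<rho> t1 t2"
proof -
  define a d where "a = x - y" and "d = t1 - t2"
  have "\<sigma>3 > 0"
    using c3 by (rule cocoercive_pos)
  have residual: "(x - T x) - (y - T y) = \<eta> *\<^sub>R d"
    by (simp add: T_def d_def t1_def t2_def algebra_simps)
  then have T_diff: "T x - T y = a - \<eta> *\<^sub>R d"
    by (simp add: a_def algebra_simps)
  have weighted_cocoercivity: "\<gamma> * (norm d)\<^sup>2 + \<rho> t1 t2
      + \<delta> / (4 * \<sigma>3) * ((norm (d - (2 * \<sigma>3) *\<^sub>R t3))\<^sup>2 - (norm d)\<^sup>2) \<le> \<nu> * inner a d"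
    using cocoercive_splitting_weighted_inequality[OF c1 c2 c3 _ \<open>\<delta> \<ge> 0\<close> S_def quadratic_bound,
        of x y] norm_sq_completing_square[of \<sigma>3 t3 d] \<open>\<nu> > 0\<close> \<open>\<sigma>3 > 0\<close>
    by (simp add: a_def d_def t1_def t2_def t3_def)
  have "(norm (a - \<eta> *\<^sub>R d))\<^sup>2 = (norm a)\<^sup>2 - 2 * \<eta> * inner a d + \<eta>\<^sup>2 * (norm d)\<^sup>2"
    unfolding power2_norm_eq_inner
    by (simp add: inner_diff_left inner_diff_right inner_commute[of d a] power2_eq_square algebra_simps)
  also have "\<dots> \<le> (norm a)\<^sup>2 - (\<eta>s / \<eta> - 1) * (\<eta>\<^sup>2 * (norm d)\<^sup>2)
      - \<delta> / (2 * \<eta> * \<nu> * \<sigma>3) * (\<eta>\<^sup>2 * (norm (d - (2 * \<sigma>3) *\<^sub>R t3))\<^sup>2)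
      - 2 * \<eta> / \<nu> * \<rho> t1 t2" (is "?lhs \<le> ?rhs")
  proof -
    let ?m = "\<gamma> * (norm d)\<^sup>2 + \<rho> t1 t2
      + \<delta> / (4 * \<sigma>3) * ((norm (d - (2 * \<sigma>3) *\<^sub>R t3))\<^sup>2 - (norm d)\<^sup>2)"
    have "?rhs - ?lhs = 2 * \<eta> / \<nu> * (\<nu> * inner a d - ?m)"
      using \<open>\<eta> > 0\<close> \<open>\<nu> > 0\<close> \<open>\<sigma>3 > 0\<close> unfolding \<eta>s
      by (simp add: field_simps power2_eq_square)
    moreover have "2 * \<eta> / \<nu> * (\<nu> * inner a d - ?m) \<ge> 0"
      using weighted_cocoercivity \<open>\<eta> > 0\<close> \<open>\<nu> > 0\<close> by simp
    ultimately show ?thesis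
      by linarith
  qed
  finally have "(norm (a - \<eta> *\<^sub>R d))\<^sup>2 \<le> ?rhs" .
  moreover have "(norm ((x - T x) - (y - T y)))\<^sup>2 = \<eta>\<^sup>2 * (norm d)\<^sup>2"
    by (simp add: residual power_mult_distrib)
  moreover have "(x - T x) - (y - T y) - (2 * \<eta> * \<sigma>3) *\<^sub>R t3 = \<eta> *\<^sub>R (d - (2 * \<sigma>3) *\<^sub>R t3)"
    unfolding residual by (simp add: algebra_simps)
  then have "(norm ((x - T x) - (y - T y) - (2 * \<eta> * \<sigma>3) *\<^sub>R t3))\<^sup>2
      = \<eta>\<^sup>2 * (norm (d - (2 * \<sigma>3) *\<^sub>R t3))\<^sup>2"
    by (simp add: power_mult_distrib)
  ultimately show ?thesis
    unfolding T_diff a_def by simp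
qed

lemma cocoercive_splitting_conically_averaged:
  fixes T1 T2 T3 S T :: "'a::real_inner \<Rightarrow> 'a" and \<rho> :: "'a \<Rightarrow> 'a \<Rightarrow> real"
  assumes "cocoercive \<sigma>1 T1" "cocoercive \<sigma>2 T2" and c3: "cocoercive \<sigma>3 T3"
    and "\<eta> > 0" "\<nu> > 0" "\<delta> \<ge> 0"
    and "S = (\<lambda>x. - (\<nu> *\<^sub>R x) + lam *\<^sub>R T1 x - \<delta> *\<^sub>R T3 (T1 x))"
    and "T = (\<lambda>x. x - \<eta> *\<^sub>R T1 x + \<eta> *\<^sub>R T2 (S x))"
    and "\<And>v w. \<gamma> * (norm (v - w))\<^sup>2 + \<rho> v w
      \<le> \<nu> * \<sigma>1 * (norm v)\<^sup>2 - lam * inner v w + \<sigma>2 * (norm w)\<^sup>2"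
    and \<rho>_nonneg: "\<And>v w. \<rho> v w \<ge> 0"
    and \<eta>s: "\<eta>s = (2 * \<gamma> - \<delta> / (2 * \<sigma>3)) / \<nu>" "\<eta>s > 0"
  shows "(\<forall>x y. (norm (T x - T y))\<^sup>2 \<le> (norm (x - y))\<^sup>2
      - (\<eta>s / \<eta> - 1) * (norm ((x - T x) - (y - T y)))\<^sup>2
      - \<delta> / (2 * \<eta> * \<nu> * \<sigma>3) *
          (norm ((x - T x) - (y - T y) - (2 * \<eta> * \<sigma>3) *\<^sub>R (T3 (T1 x) - T3 (T1 y))))\<^sup>2
      - 2 * \<eta> / \<nu> * \<rho> (T1 x - T1 y) (T2 (S x) - T2 (S y)))
    \<and> conically_averaged (\<eta> / \<eta>s) T"
proof -
  note descent = cocoercive_splitting_descent[OF assms(1-9) \<eta>s(1)]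
  have "\<sigma>3 > 0"
    using c3 by (rule cocoercive_pos)
  have "conically_averaged (\<eta> / \<eta>s) T"
  proof (rule conically_averagedI)
    show "\<eta> / \<eta>s > 0"
      using \<open>\<eta> > 0\<close> \<open>\<eta>s > 0\<close> by simp
    fix x y
    have "\<delta> / (2 * \<eta> * \<nu> * \<sigma>3) *
          (norm ((x - T x) - (y - T y) - (2 * \<eta> * \<sigma>3) *\<^sub>R (T3 (T1 x) - T3 (T1 y))))\<^sup>2 \<ge> 0"
      using \<open>\<eta> > 0\<close> \<open>\<nu> > 0\<close> \<open>\<delta> \<ge> 0\<close> \<open>\<sigma>3 > 0\<close> by simp
    moreover have "2 * \<eta> / \<nu> * \<rho> (T1 x - T1 y) (T2 (S x) - T2 (S y)) \<ge> 0"
      using \<open>\<eta> > 0\<close> \<open>\<nu> > 0\<close> \<rho>_nonneg by simp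
    ultimately show "(norm (T x - T y))\<^sup>2
      \<le> (norm (x - y))\<^sup>2 - (1 / (\<eta> / \<eta>s) - 1) * (norm ((x - T x) - (y - T y)))\<^sup>2"
      using descent[of x y] by simp
  qed
  with descent show ?thesis
    by blast
qed

lemma cocoercive_splitting_balanced:
  fixes T1 T2 T3 S T :: "'a::real_inner \<Rightarrow> 'a"
  assumes "cocoercive \<sigma>1 T1" "cocoercive \<sigma>2 T2" "cocoercive \<sigma>3 T3"
    and "\<eta> > 0" "\<nu> > 0" "\<delta> \<ge> 0"
    and "S = (\<lambda>x. - (\<nu> *\<^sub>R x) + lam *\<^sub>R T1 x - \<delta> *\<^sub>R T3 (T1 x))"
    and "T = (\<lambda>x. x - \<eta> *\<^sub>R T1 x + \<eta> *\<^sub>R T2 (S x))"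
    and balanced: "lam = 2 * \<nu> * \<sigma>1" "lam = 2 * \<sigma>2"
    and \<eta>s: "\<eta>s = (1 / \<nu>) * (lam - \<delta> / (2 * \<sigma>3))" "\<eta>s > 0"
  shows "(\<forall>x y. (norm (T x - T y))\<^sup>2 \<le> (norm (x - y))\<^sup>2
      - (\<eta>s / \<eta> - 1) * (norm ((x - T x) - (y - T y)))\<^sup>2
      - \<delta> / (2 * \<eta> * \<nu> * \<sigma>3) *
          (norm ((x - T x) - (y - T y) - (2 * \<eta> * \<sigma>3) *\<^sub>R (T3 (T1 x) - T3 (T1 y))))\<^sup>2)
    \<and> conically_averaged (\<eta> / \<eta>s) T"
proof -
  have quadratic_bound: "lam / 2 * (norm (v - w))\<^sup>2 + 0
      \<le> \<nu> * \<sigma>1 * (norm v)\<^sup>2 - lam * inner v w + \<sigma>2 * (norm w)\<^sup>2" for v w :: 'a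
    using quadratic_form_eq_of_balanced[of "\<nu> * \<sigma>1" lam \<sigma>2 v w] balanced by simp
  have "\<eta>s = (2 * (lam / 2) - \<delta> / (2 * \<sigma>3)) / \<nu>"
    using \<eta>s(1) by simp
  from cocoercive_splitting_conically_averaged[OF assms(1-8) quadratic_bound order_refl this \<eta>s(2)]
  show ?thesis
    unfolding mult_zero_right diff_0_right .
qed

lemma cocoercive_splitting_unbalanced:
  fixes T1 T2 T3 S T :: "'a::real_inner \<Rightarrow> 'a"
  assumes "cocoercive \<sigma>1 T1" "cocoercive \<sigma>2 T2" "cocoercive \<sigma>3 T3"
    and "\<eta> > 0" "\<nu> > 0" "\<delta> \<ge> 0"
    and "S = (\<lambda>x. - (\<nu> *\<^sub>R x) + lam *\<^sub>R T1 x - \<delta> *\<^sub>R T3 (T1 x))"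
    and "T = (\<lambda>x. x - \<eta> *\<^sub>R T1 x + \<eta> *\<^sub>R T2 (S x))"
    and unbalanced: "lam < \<nu> * \<sigma>1 + \<sigma>2"
    and \<eta>s: "\<eta>s = (1 / \<nu>) * ((2 * \<nu> * \<sigma>1 - lam) * (2 * \<sigma>2 - lam) / (2 * (\<nu> * \<sigma>1 + \<sigma>2 - lam))
                + lam - \<delta> / (2 * \<sigma>3))" "\<eta>s > 0"
  shows "(\<forall>x y. (norm (T x - T y))\<^sup>2 \<le> (norm (x - y))\<^sup>2
      - (\<eta>s / \<eta> - 1) * (norm ((x - T x) - (y - T y)))\<^sup>2
      - \<delta> / (2 * \<eta> * \<nu> * \<sigma>3) *
          (norm ((x - T x) - (y - T y) - (2 * \<eta> * \<sigma>3) *\<^sub>R (T3 (T1 x) - T3 (T1 y))))\<^sup>2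
      - \<eta> / (2 * \<nu> * (\<nu> * \<sigma>1 + \<sigma>2 - lam)) *
          (norm ((2 * \<nu> * \<sigma>1 - lam) *\<^sub>R (T1 x - T1 y) + (2 * \<sigma>2 - lam) *\<^sub>R (T2 (S x) - T2 (S y))))\<^sup>2)
    \<and> conically_averaged (\<eta> / \<eta>s) T"
proof -
  let ?k = "\<nu> * \<sigma>1 + \<sigma>2 - lam" and ?p = "2 * \<nu> * \<sigma>1 - lam" and ?q = "2 * \<sigma>2 - lam"
  have "?k > 0"
    using unbalanced by simp
  have quadratic_bound: "(lam / 2 + ?p * ?q / (4 * ?k)) * (norm (v - w))\<^sup>2
      + (norm (?p *\<^sub>R v + ?q *\<^sub>R w))\<^sup>2 / (4 * ?k)
      \<le> \<nu> * \<sigma>1 * (norm v)\<^sup>2 - lam * inner v w + \<sigma>2 * (norm w)\<^sup>2" for v w :: 'a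
    using quadratic_form_decomposition[of "\<nu> * \<sigma>1" \<sigma>2 lam v w] \<open>?k > 0\<close>
    by (simp add: mult.assoc)
  have remainder_nonneg: "(norm (?p *\<^sub>R v + ?q *\<^sub>R w))\<^sup>2 / (4 * ?k) \<ge> 0" for v w :: 'a
    using \<open>?k > 0\<close> by simp
  have "1 / \<nu> * (r / (2 * k) + lam - c) = (2 * (lam / 2 + r / (4 * k)) - c) / \<nu>" for r k c
    by (simp add: divide_simps)
  then have "\<eta>s = (2 * (lam / 2 + ?p * ?q / (4 * ?k)) - \<delta> / (2 * \<sigma>3)) / \<nu>"
    unfolding \<eta>s(1) .
  moreover have coefficient: "2 * \<eta> / \<nu> * (r / (4 * k)) = \<eta> / (2 * \<nu> * k) * r" for r k
    by (simp add: divide_simps)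
  ultimately show ?thesis
    using cocoercive_splitting_conically_averaged
      [OF assms(1-8) quadratic_bound remainder_nonneg _ \<eta>s(2)]
    unfolding coefficient by blast
qed

theorem proposition3p2:
  fixes T1 T2 T3 S T :: "'a::{real_inner, complete_space} \<Rightarrow> 'a"
    and \<sigma>1 \<sigma>2 \<sigma>3 \<eta> \<nu> lam \<delta> :: real
  assumes c1: "cocoercive \<sigma>1 T1" and c2: "cocoercive \<sigma>2 T2" and c3: "cocoercive \<sigma>3 T3"
    and pos: "\<eta> > 0" "\<nu> > 0" "lam > 0" "\<delta> > 0"
    and S_def: "S = (\<lambda>x. - (\<nu> *\<^sub>R x) + lam *\<^sub>R T1 x - \<delta> *\<^sub>R T3 (T1 x))"
    and T_def: "T = (\<lambda>x. x - \<eta> *\<^sub>R T1 x + \<eta> *\<^sub>R T2 (S x))"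
  shows
   "(let \<eta>s = (1 / \<nu>) * (lam - \<delta> / (2 * \<sigma>3)) in
      (lam = 2 * \<nu> * \<sigma>1 \<and> lam = 2 * \<sigma>2 \<and> \<eta>s > 0) \<longrightarrow>
      ((\<forall>x y. (norm (T x - T y))\<^sup>2 \<le> (norm (x - y))\<^sup>2
          - (\<eta>s / \<eta> - 1) * (norm ((x - T x) - (y - T y)))\<^sup>2
          - \<delta> / (2 * \<eta> * \<nu> * \<sigma>3) *
              (norm ((x - T x) - (y - T y) - (2 * \<eta> * \<sigma>3) *\<^sub>R (T3 (T1 x) - T3 (T1 y))))\<^sup>2)
       \<and> conically_averaged (\<eta> / \<eta>s) T))
   \<and>
   (let \<eta>s = (1 / \<nu>) * ((2 * \<nu> * \<sigma>1 - lam) * (2 * \<sigma>2 - lam) / (2 * (\<nu> * \<sigma>1 + \<sigma>2 - lam))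
                + lam - \<delta> / (2 * \<sigma>3)) in
      (lam < \<nu> * \<sigma>1 + \<sigma>2 \<and> \<eta>s > 0) \<longrightarrow>
      ((\<forall>x y. (norm (T x - T y))\<^sup>2 \<le> (norm (x - y))\<^sup>2
          - (\<eta>s / \<eta> - 1) * (norm ((x - T x) - (y - T y)))\<^sup>2
          - \<delta> / (2 * \<eta> * \<nu> * \<sigma>3) *
              (norm ((x - T x) - (y - T y) - (2 * \<eta> * \<sigma>3) *\<^sub>R (T3 (T1 x) - T3 (T1 y))))\<^sup>2
          - \<eta> / (2 * \<nu> * (\<nu> * \<sigma>1 + \<sigma>2 - lam)) *
              (norm ((2 * \<nu> * \<sigma>1 - lam) *\<^sub>R (T1 x - T1 y) + (2 * \<sigma>2 - lam) *\<^sub>R (T2 (S x) - T2 (S y))))\<^sup>2)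
       \<and> conically_averaged (\<eta> / \<eta>s) T))"
proof -
  have "\<delta> \<ge> 0"
    using pos(4) by simp
  note hyps = c1 c2 c3 pos(1,2) this S_def T_def
  show ?thesis
    unfolding Let_def
    using cocoercive_splitting_balanced[OF hyps _ _ refl] cocoercive_splitting_unbalanced[OF hyps _ refl]
    by blast
qed

end
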